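(* Let $H:[0,1]\times\mathbb R\to\mathbb R$ be continuous, coercive in $p$, and quasiconvex in $p$ with $\mathrm{Int}\{p: H(s,p)\le b\}=\{p:H(s,p)<b\}$ for all $s\in[0,1]$, $b\in\mathbb R$. Set $a_H=\max_{s\in[0,1]}\min_{p\in\mathbb R}H(s,p)$. Let $a\ge a_H$, and if $a=a_H$ assume in addition that $s\mapsto \min_p H(s,p)$ is constant on $[0,1]$. For $s\in[0,1]$ put $\sigma^+_a(s)=\max\{p: H(s,p)=a\}$ and $\sigma^-_a(s)=\min\{p:H(s,p)=a\}$. Let $\alpha,\beta\in\mathbb R$ satisfy $$\int_0^1\sigma^-_a(t)\,dt\le \beta-\alpha\le\int_0^1\sigma^+_a(t)\,dt .$$ Then the function $$w(s)=\min\Big\{\alpha+\int_0^s\sigma^+_a(t)\,dt,\ \beta-\int_s^1\sigma^-_a(t)\,dt\Big\},\qquad s\in[0,1],$$ is the unique function, continuous on $[0,1]$, which is a viscosity solution of $H(s,u'(s))=a$ in $(0,1)$ and satisfies $u(0)=\alpha$, $u(1)=\beta$.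
   Context: Coercive in $p$ means $H(s,p)\to+\infty$ as $|p|\to\infty$, uniformly in $s\in[0,1]$; quasiconvex in $p$ means that all sublevel sets $\{p:H(s,p)\le b\}$ are convex. Solutions are understood in the viscosity sense. *)

theory Defs
  imports "HOL-Analysis.Analysis"
begin

definition C1_fun :: "(real \<Rightarrow> real) \<Rightarrow> bool" where
  "C1_fun \<phi> \<longleftrightarrow> (\<exists>\<phi>'. (\<forall>x. (\<phi> has_real_derivative \<phi>' x) (at x)) \<and> continuous_on UNIV \<phi>')"

definition visc_subsol :: "(real \<Rightarrow> real \<Rightarrow> real) \<Rightarrow> real \<Rightarrow> (real \<Rightarrow> real) \<Rightarrow> bool" where
  "visc_subsol H a u \<longleftrightarrow>
     (\<forall>s0\<in>{0<..<1}. \<forall>\<phi>. C1_fun \<phi> \<longrightarrow>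
        (\<exists>e>0. \<forall>s\<in>{0<..<1}. \<bar>s - s0\<bar> < e \<longrightarrow> u s - \<phi> s \<le> u s0 - \<phi> s0) \<longrightarrow>
        H s0 (deriv \<phi> s0) \<le> a)"

definition visc_supersol :: "(real \<Rightarrow> real \<Rightarrow> real) \<Rightarrow> real \<Rightarrow> (real \<Rightarrow> real) \<Rightarrow> bool" where
  "visc_supersol H a u \<longleftrightarrow>
     (\<forall>s0\<in>{0<..<1}. \<forall>\<phi>. C1_fun \<phi> \<longrightarrow>
        (\<exists>e>0. \<forall>s\<in>{0<..<1}. \<bar>s - s0\<bar> < e \<longrightarrow> u s - \<phi> s \<ge> u s0 - \<phi> s0) \<longrightarrow>
        H s0 (deriv \<phi> s0) \<ge> a)"

definition visc_sol :: "(real \<Rightarrow> real \<Rightarrow> real) \<Rightarrow> real \<Rightarrow> (real \<Rightarrow> real) \<Rightarrow> bool" where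
  "visc_sol H a u \<longleftrightarrow> visc_subsol H a u \<and> visc_supersol H a u"

text \<open>min_p H(s,p) (attained under coercivity and continuity).\<close>
definition minH :: "(real \<Rightarrow> real \<Rightarrow> real) \<Rightarrow> real \<Rightarrow> real" where
  "minH H s = (INF p. H s p)"

definition aH :: "(real \<Rightarrow> real \<Rightarrow> real) \<Rightarrow> real" where
  "aH H = (SUP s\<in>{0..1}. minH H s)"

text \<open>sigma^+_a(s) = max{p. H(s,p)=a}, sigma^-_a(s) = min{p. H(s,p)=a}
  (the sets are compact and nonempty under the hypotheses).\<close>
definition sigma_plus :: "(real \<Rightarrow> real \<Rightarrow> real) \<Rightarrow> real \<Rightarrow> real \<Rightarrow> real" where
  "sigma_plus H a s = Sup {p. H s p = a}"

definition sigma_minus :: "(real \<Rightarrow> real \<Rightarrow> real) \<Rightarrow> real \<Rightarrow> real \<Rightarrow> real" where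
  "sigma_minus H a s = Inf {p. H s p = a}"

end

(*
  A solution is pinned between two one-sided comparisons.  Since the subsolution test only
  allows slopes in [sigma_minus, sigma_plus], a subsolution with the boundary values grows at most
  like the primitive of sigma_plus from the left end and at least like that of sigma_minus towards
  the right end, so it lies below w.  Conversely, for any continuous slope sigma strictly between
  the two branches, the supersolution test forbids an interior minimum of u minus a primitive of
  sigma; taking sigma close to sigma_plus left of a point and close to sigma_minus right of it shows
  that u lies above w.  When a = aH H the two branches coincide and the subsolution bound alone
  suffices.  The function w itself is a solution because it is the minimum of the two primitives,
  whose difference is nondecreasing.
*)
theory Submission
  imports Defs
begin

section \<open>Antiderivatives and one-sided derivative comparisons\<close>

text \<open>One of the two integrals is over a degenerate interval, so prim g is the antiderivative
  of g vanishing at 0, for arguments of either sign.\<close>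

definition prim :: "(real \<Rightarrow> real) \<Rightarrow> real \<Rightarrow> real" where
  "prim g x = integral {0..x} g - integral {x..0} g"

lemma prim_eq_integral_from:
  assumes g: "continuous_on UNIV g" and "0 \<le> N" "-N \<le> y"
  shows "prim g y = integral {-N..y} g - integral {-N..0} g"
proof -
  have "g integrable_on {-N..max 0 y}"
    using g integrable_continuous_real continuous_on_subset by blast
  then have int: "g integrable_on {-N..0}" "g integrable_on {-N..y}"
    using integrable_subinterval_real by fastforce+
  show ?thesis
  proof (cases "0 \<le> y")
    case True
    then have "integral {y..0} g = 0"
      by (cases "y = 0") auto
    then show ?thesis
      using Henstock_Kurzweil_Integration.integral_combine[OF _ True int(2)] assms
      by (simp add: prim_def)
  next
    case False
    then show ?thesis
      using Henstock_Kurzweil_Integration.integral_combine[OF _ _ int(1), of y] assms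
      by (simp add: prim_def)
  qed
qed

lemma has_real_derivative_prim:
  assumes g: "continuous_on UNIV g"
  shows "(prim g has_real_derivative g x) (at x)"
proof -
  define N where "N = \<bar>x\<bar> + 1"
  have "((\<lambda>y. integral {-N..y} g) has_real_derivative g x) (at x within {-N..N})"
    by (rule integral_has_real_derivative) (use g continuous_on_subset N_def in auto)
  moreover have "x \<in> interior {-N..N}" unfolding N_def by auto
  ultimately have "((\<lambda>y. integral {-N..y} g - integral {-N..0} g) has_real_derivative g x) (at x)"
    using at_within_interior DERIV_diff[OF _ DERIV_const] by fastforce
  then show ?thesis
    by (rule has_field_derivative_transform_within_open[of _ _ _ "{-N<..}"])
       (auto simp: N_def prim_eq_integral_from[OF g, of N])
qed

lemma prim_0 [simp]: "prim g 0 = 0"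
  by (simp add: prim_def)

lemma integral_eq_prim_diff:
  assumes g: "continuous_on UNIV g" and "s \<le> t"
  shows "integral {s..t} g = prim g t - prim g s"
proof -
  define N where "N = \<bar>s\<bar> + \<bar>t\<bar>"
  have "g integrable_on {-N..t}"
    using g integrable_continuous_real continuous_on_subset by blast
  then have "integral {-N..s} g + integral {s..t} g = integral {-N..t} g"
    using Henstock_Kurzweil_Integration.integral_combine[where a="-N" and c=s and b=t and f=g] assms by (auto simp: N_def)
  then show ?thesis
    using prim_eq_integral_from[OF g, of N s] prim_eq_integral_from[OF g, of N t] by (auto simp: N_def)
qed

definition ext01 :: "(real \<Rightarrow> real) \<Rightarrow> real \<Rightarrow> real" where
  "ext01 f x = f (max 0 (min 1 x))"

lemma ext01_eq [simp]: "x \<in> {0..1} \<Longrightarrow> ext01 f x = f x"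
  by (simp add: ext01_def)

lemma continuous_on_ext01: "continuous_on {0..1} f \<Longrightarrow> continuous_on UNIV (ext01 f)"
  unfolding ext01_def
  by (rule continuous_on_compose2[of "{0..1}" f]) (auto intro!: continuous_intros)

lemma ramp_cutoff:
  fixes x \<eta> \<theta> :: real
  assumes "0 < \<theta>" "\<theta> \<le> 1 / 2" "0 < \<eta>"
  obtains \<rho> where "continuous_on UNIV \<rho>" "\<And>y. \<theta> \<le> \<rho> y" "\<And>y. \<rho> y \<le> 1 - \<theta>"
    "\<And>y. y \<le> x \<Longrightarrow> \<rho> y = 1 - \<theta>" "\<And>y. x + \<eta> \<le> y \<Longrightarrow> \<rho> y = \<theta>"
proof -
  define \<rho> where "\<rho> y = max \<theta> (min (1 - \<theta>) (1 - \<theta> - (y - x) / \<eta>))" for y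
  have "continuous_on UNIV \<rho>"
    unfolding \<rho>_def using \<open>0 < \<eta>\<close> by (intro continuous_intros) auto
  moreover have "\<theta> \<le> \<rho> y" "\<rho> y \<le> 1 - \<theta>" for y
    using assms(2) by (auto simp: \<rho>_def)
  moreover have "\<rho> y = 1 - \<theta>" if "y \<le> x" for y
    using that assms by (auto simp: \<rho>_def divide_nonpos_pos)
  moreover have "\<rho> y = \<theta>" if "x + \<eta> \<le> y" for y
  proof -
    have "1 \<le> (y - x) / \<eta>"
      using that assms(3) by (simp add: le_divide_eq_1_pos)
    then show ?thesis
      using assms(1,2) by (auto simp: \<rho>_def max_def)
  qed
  ultimately show ?thesis
    using that by blast
qed

lemma increment_le_of_deriv_le:
  assumes "s \<le> t" and F: "\<And>y. (F has_real_derivative f y) (at y)"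
    and G: "\<And>y. (G has_real_derivative g y) (at y)"
    and le: "\<And>y. s \<le> y \<Longrightarrow> y \<le> t \<Longrightarrow> f y \<le> g y + c"
  shows "F t - F s \<le> G t - G s + c * (t - s)"
proof -
  have "(\<lambda>y. G y + c * y - F y) s \<le> (\<lambda>y. G y + c * y - F y) t"
  proof (rule DERIV_nonneg_imp_nondecreasing[OF \<open>s \<le> t\<close>])
    fix y assume "s \<le> y" "y \<le> t"
    have "((\<lambda>y. G y + c * y - F y) has_real_derivative g y + c - f y) (at y)"
      using F[of y] G[of y] by (auto intro!: derivative_eq_intros)
    then show "\<exists>z. ((\<lambda>y. G y + c * y - F y) has_real_derivative z) (at y) \<and> 0 \<le> z"
      using le[OF \<open>s \<le> y\<close> \<open>y \<le> t\<close>] by auto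
  qed
  then show ?thesis by (simp add: algebra_simps)
qed

lemma deriv_le_of_increment_le_right:
  assumes f: "(f has_real_derivative f') (at x)" and h: "(h has_real_derivative h') (at x)"
    and "e > 0" and le: "\<And>y. x < y \<Longrightarrow> y < x + e \<Longrightarrow> f y - f x \<le> h y - h x"
  shows "f' \<le> h'"
proof (rule ccontr)
  assume "\<not> f' \<le> h'"
  then obtain d where "d > 0" and d: "\<And>k. 0 < k \<Longrightarrow> k < d \<Longrightarrow> h (x + k) - f (x + k) < h x - f x"
    using DERIV_neg_dec_right[OF DERIV_diff[OF h f]] by auto
  define k where "k = min d e / 2"
  have "0 < k" "k < d" "k < e"
    using \<open>d > 0\<close> \<open>e > 0\<close> by (auto simp: k_def)
  then show False
    using d[of k] le[of "x + k"] by auto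
qed

lemma deriv_le_of_increment_le_left:
  assumes f: "(f has_real_derivative f') (at x)" and h: "(h has_real_derivative h') (at x)"
    and "e > 0" and le: "\<And>y. x - e < y \<Longrightarrow> y < x \<Longrightarrow> f y - f x \<le> h y - h x"
  shows "h' \<le> f'"
proof (rule ccontr)
  assume "\<not> h' \<le> f'"
  then obtain d where "d > 0" and d: "\<And>k. 0 < k \<Longrightarrow> k < d \<Longrightarrow> h (x - k) - f (x - k) < h x - f x"
    using DERIV_pos_inc_left[OF DERIV_diff[OF h f]] by auto
  define k where "k = min d e / 2"
  have "0 < k" "k < d" "k < e"
    using \<open>d > 0\<close> \<open>e > 0\<close> by (auto simp: k_def)
  then show False
    using d[of k] le[of "x - k"] by auto
qed

section \<open>Test functions and viscosity inequalities on the unit interval\<close>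

lemma C1_funI:
  assumes "\<And>x. (f has_real_derivative f' x) (at x)" and "continuous_on UNIV f'"
  shows "C1_fun f" "deriv f x = f' x"
  using assms unfolding C1_fun_def by (auto intro: DERIV_imp_deriv)

lemma C1_fun_has_derivative: "C1_fun f \<Longrightarrow> (f has_real_derivative deriv f x) (at x)"
  unfolding C1_fun_def by (metis DERIV_imp_deriv)

lemma C1_fun_reflect:
  assumes "C1_fun f"
  shows "C1_fun (\<lambda>x. f (c - x))" "deriv (\<lambda>x. f (c - x)) x = - deriv f (c - x)"
proof -
  obtain f' where f': "\<And>x. (f has_real_derivative f' x) (at x)" "continuous_on UNIV f'"
    using assms unfolding C1_fun_def by blast
  have "((\<lambda>x. f (c - x)) has_real_derivative f' (c - x) * (0 - 1)) (at x)" for x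
    by (rule DERIV_chain2[OF f'(1)]) (intro derivative_intros)
  then have d: "((\<lambda>x. f (c - x)) has_real_derivative - f' (c - x)) (at x)" for x
    by simp
  have "continuous_on UNIV (\<lambda>x. - f' (c - x))"
    by (intro continuous_intros continuous_on_compose2[OF f'(2)]) auto
  note C1 = C1_funI[OF d this]
  show "C1_fun (\<lambda>x. f (c - x))" "deriv (\<lambda>x. f (c - x)) x = - deriv f (c - x)"
    using C1 DERIV_imp_deriv[OF f'(1)] by auto
qed

definition penalty :: "real \<Rightarrow> real \<Rightarrow> real" where
  "penalty c x = (max (x - c) 0)^2"

lemma has_real_derivative_penalty: "(penalty c has_real_derivative 2 * max (x - c) 0) (at x)"
proof (cases x c rule: linorder_cases)
  case less
  have "((\<lambda>y. 0) has_real_derivative 2 * max (x - c) 0) (at x)"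
    using less by simp
  then show ?thesis
    by (rule has_field_derivative_transform_within_open[of _ _ _ "{..<c}"])
       (use less in \<open>auto simp: penalty_def\<close>)
next
  case equal
  have "norm ((penalty c (x + h) - penalty c x) / h) \<le> \<bar>h\<bar>" for h
    using equal by (cases "h > 0") (auto simp: penalty_def power2_eq_square max_def)
  then have "\<forall>\<^sub>F h in at 0. norm ((penalty c (x + h) - penalty c x) / h) \<le> \<bar>h\<bar>"
    by (intro always_eventually allI)
  moreover have "((\<lambda>h::real. \<bar>h\<bar>) \<longlongrightarrow> 0) (at 0)"
    using tendsto_rabs[OF tendsto_ident_at, of 0 UNIV] by simp
  ultimately have "((\<lambda>h. (penalty c (x + h) - penalty c x) / h) \<longlongrightarrow> 0) (at 0)"
    by (rule Lim_null_comparison)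
  then show ?thesis
    using equal by (simp add: DERIV_def)
next
  case greater
  have "((\<lambda>y. (y - c)^2) has_real_derivative 2 * max (x - c) 0) (at x)"
    using greater by (auto intro!: derivative_eq_intros)
  then show ?thesis
    by (rule has_field_derivative_transform_within_open[of _ _ _ "{c<..}"])
       (use greater in \<open>auto simp: penalty_def\<close>)
qed

lemma interior_max_with_penalty:
  fixes f :: "real \<Rightarrow> real"
  assumes f: "continuous_on {s..t} f" and "s < t" and "f s < f t"
  obtains x0 M c where "s < x0" "x0 < t" "M \<ge> 0"
    "\<And>x. x \<in> {s..t} \<Longrightarrow> f x - M * penalty c x \<le> f x0 - M * penalty c x0"
proof -
  have "t \<in> {s..t}" using \<open>s < t\<close> by simp
  moreover have "f t - f s > 0" using \<open>f s < f t\<close> by simp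
  ultimately obtain d where "d > 0"
    and d: "\<forall>x\<in>{s..t}. dist x t < d \<longrightarrow> dist (f x) (f t) < f t - f s"
    using f unfolding continuous_on_iff by blast
  define c where "c = max ((s + t) / 2) (t - d / 2)"
  have "(s + t) / 2 \<le> c" "t - d / 2 \<le> c" "c < t"
    using \<open>s < t\<close> \<open>d > 0\<close> by (auto simp: c_def)
  then have c: "s < c" "c < t" "t - c < d"
    using \<open>s < t\<close> \<open>d > 0\<close> by auto
  then have "f s < f c"
    using d[rule_format, of c] by (auto simp: dist_real_def)
  text \<open>M is so large that the penalized function drops below its value at c when it reaches t,
    while it is unchanged on [s, c]; hence its maximum is interior.\<close>
  define M where "M = (\<bar>f t - f c\<bar> + 1) / (t - c)^2"
  define g where "g x = f x - M * penalty c x" for x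
  have gc: "continuous_on {s..t} g"
    unfolding g_def penalty_def by (intro continuous_intros f)
  obtain x0 where x0: "x0 \<in> {s..t}" "\<And>x. x \<in> {s..t} \<Longrightarrow> g x \<le> g x0"
    using continuous_attains_sup[OF compact_Icc _ gc] \<open>s < t\<close> by auto
  have "g s = f s" "g c = f c" "g t = f c - 1 + (f t - f c - \<bar>f t - f c\<bar>)"
    using c by (auto simp: g_def penalty_def M_def)
  then have "g s < g x0" "g t < g x0"
    using x0(2)[of c] c \<open>f s < f c\<close> by auto
  then have "s < x0" "x0 < t"
    using x0(1) by (auto simp: le_less)
  moreover have "M \<ge> 0" by (simp add: M_def)
  ultimately show ?thesis
    using that x0 unfolding g_def by blast
qed

lemma visc_subsol_reflect:
  assumes "visc_subsol H a u"
  shows "visc_subsol (\<lambda>s p. H (1 - s) (- p)) a (\<lambda>s. u (1 - s))"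
  unfolding visc_subsol_def
proof (intro ballI allI impI)
  fix s0 :: real and \<phi> assume s0: "s0 \<in> {0<..<1}" and \<phi>: "C1_fun \<phi>"
  assume "\<exists>e>0. \<forall>s\<in>{0<..<1}. \<bar>s - s0\<bar> < e \<longrightarrow> u (1 - s) - \<phi> s \<le> u (1 - s0) - \<phi> s0"
  then obtain e where "e > 0"
    and e: "\<forall>s\<in>{0<..<1}. \<bar>s - s0\<bar> < e \<longrightarrow> u (1 - s) - \<phi> s \<le> u (1 - s0) - \<phi> s0"
    by blast
  let ?\<psi> = "\<lambda>x. \<phi> (1 - x)"
  have "\<forall>s\<in>{0<..<1}. \<bar>s - (1 - s0)\<bar> < e \<longrightarrow> u s - ?\<psi> s \<le> u (1 - s0) - ?\<psi> (1 - s0)"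
    using e by (auto dest!: bspec[of _ _ "1 - _"])
  moreover have "1 - s0 \<in> {0<..<1}" using s0 by auto
  ultimately have "H (1 - s0) (deriv ?\<psi> (1 - s0)) \<le> a"
    using assms \<open>e > 0\<close> C1_fun_reflect(1)[OF \<phi>] unfolding visc_subsol_def by blast
  then show "H (1 - s0) (- deriv \<phi> s0) \<le> a"
    using C1_fun_reflect(2)[OF \<phi>, of 1 "1 - s0"] by simp
qed

lemma C1_fun_penalized:
  assumes G: "\<And>x. (G has_real_derivative g x) (at x)" and g: "continuous_on UNIV g"
  shows "C1_fun (\<lambda>x. G x + l * x + M * penalty c x)"
    "deriv (\<lambda>x. G x + l * x + M * penalty c x) x = g x + l + M * (2 * max (x - c) 0)"
proof -
  have "((\<lambda>x. G x + l * x + M * penalty c x) has_real_derivative g x + l + M * (2 * max (x - c) 0))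
      (at x)" for x
    using G[of x] has_real_derivative_penalty[of c x] by (auto intro!: derivative_eq_intros)
  moreover have "continuous_on UNIV (\<lambda>x. g x + l + M * (2 * max (x - c) 0))"
    by (intro continuous_intros g)
  ultimately show "C1_fun (\<lambda>x. G x + l * x + M * penalty c x)"
    "deriv (\<lambda>x. G x + l * x + M * penalty c x) x = g x + l + M * (2 * max (x - c) 0)"
    by (rule C1_funI)+
qed

lemma visc_subsol_interior_max:
  assumes sub: "visc_subsol H a u" and \<phi>: "C1_fun \<phi>"
    and "0 \<le> s" "s < x0" "x0 < t" "t \<le> 1"
    and max: "\<And>y. y \<in> {s..t} \<Longrightarrow> u y - \<phi> y \<le> u x0 - \<phi> x0"
  shows "H x0 (deriv \<phi> x0) \<le> a"
proof -
  have "\<forall>y\<in>{0<..<1}. \<bar>y - x0\<bar> < min (x0 - s) (t - x0) \<longrightarrow> u y - \<phi> y \<le> u x0 - \<phi> x0"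
  proof (intro ballI impI)
    fix y assume "\<bar>y - x0\<bar> < min (x0 - s) (t - x0)"
    then have "y \<in> {s..t}" by auto
    then show "u y - \<phi> y \<le> u x0 - \<phi> x0" by (rule max)
  qed
  moreover have "min (x0 - s) (t - x0) > 0" "x0 \<in> {0<..<1}"
    using assms(3-6) by auto
  ultimately show ?thesis
    using sub \<phi> unfolding visc_subsol_def by blast
qed

lemma visc_subsol_slope_le:
  assumes sub: "visc_subsol H a u" and u: "continuous_on {0..1} u"
    and G: "\<And>x. (G has_real_derivative g x) (at x)" and g: "continuous_on UNIV g"
    and bound: "\<And>x p. x \<in> {0<..<1} \<Longrightarrow> H x p \<le> a \<Longrightarrow> p \<le> g x"
    and "0 \<le> s" "s \<le> t" "t \<le> 1"
  shows "u t - u s \<le> G t - G s"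
proof (rule ccontr)
  assume neg: "\<not> u t - u s \<le> G t - G s"
  then have "s < t"
    using \<open>s \<le> t\<close> by (cases "s = t") auto
  define l where "l = ((u t - u s) - (G t - G s)) / (2 * (t - s))"
  define f where "f x = u x - G x - l * x" for x
  have "l > 0"
    using neg \<open>s < t\<close> by (simp add: l_def)
  have "l * (t - s) = ((u t - u s) - (G t - G s)) / 2"
    using \<open>s < t\<close> by (simp add: l_def field_simps)
  then have "f s < f t"
    using neg by (simp add: f_def algebra_simps)
  have "continuous_on {s..t} G"
    using G by (meson DERIV_isCont continuous_at_imp_continuous_on)
  moreover have "continuous_on {s..t} u"
    using u by (rule continuous_on_subset) (use assms(6-8) in auto)
  ultimately have "continuous_on {s..t} f"
    unfolding f_def by (intro continuous_intros)
  then obtain x0 M c where x0: "s < x0" "x0 < t" "M \<ge> 0"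
    and max: "\<And>x. x \<in> {s..t} \<Longrightarrow> f x - M * penalty c x \<le> f x0 - M * penalty c x0"
    using \<open>s < t\<close> \<open>f s < f t\<close> by (rule interior_max_with_penalty) blast
  let ?\<phi> = "\<lambda>x. G x + l * x + M * penalty c x"
  have "u y - ?\<phi> y \<le> u x0 - ?\<phi> x0" if "y \<in> {s..t}" for y
    using max[OF that] by (simp add: f_def algebra_simps)
  then have "H x0 (deriv ?\<phi> x0) \<le> a"
    using visc_subsol_interior_max[OF sub C1_fun_penalized(1)[OF G g]] x0 assms(6-8) by blast
  then have "g x0 + l + M * (2 * max (x0 - c) 0) \<le> g x0"
    using bound x0 assms(6-8) C1_fun_penalized(2)[OF G g] by simp
  moreover have "0 \<le> M * (2 * max (x0 - c) 0)"
    using \<open>M \<ge> 0\<close> by simp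
  ultimately show False
    using \<open>l > 0\<close> by linarith
qed

text \<open>The lower bound follows from the upper one applied to the reflected problem.\<close>

lemma visc_subsol_slope_ge:
  assumes sub: "visc_subsol H a u" and u: "continuous_on {0..1} u"
    and G: "\<And>x. (G has_real_derivative g x) (at x)" and g: "continuous_on UNIV g"
    and bound: "\<And>x p. x \<in> {0<..<1} \<Longrightarrow> H x p \<le> a \<Longrightarrow> g x \<le> p"
    and "0 \<le> s" "s \<le> t" "t \<le> 1"
  shows "G t - G s \<le> u t - u s"
proof -
  have "((\<lambda>x. G (1 - x)) has_real_derivative g (1 - x) * (0 - 1)) (at x)" for x
    by (rule DERIV_chain2[OF G]) (intro derivative_intros)
  then have "((\<lambda>x. G (1 - x)) has_real_derivative - g (1 - x)) (at x)" for x
    by simp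
  moreover have "continuous_on UNIV (\<lambda>x. - g (1 - x))"
    by (intro continuous_intros continuous_on_compose2[OF g]) auto
  moreover have "continuous_on {0..1} (\<lambda>x. u (1 - x))"
    by (intro continuous_on_compose2[OF u] continuous_intros) auto
  moreover have "p \<le> - g (1 - x)" if "x \<in> {0<..<1}" "H (1 - x) (- p) \<le> a" for x p
    using bound[of "1 - x" "- p"] that by auto
  ultimately have "u s - u t \<le> G s - G t"
    using visc_subsol_slope_le[OF visc_subsol_reflect[OF sub], of "\<lambda>x. G (1 - x)" "\<lambda>x. - g (1 - x)"
        "1 - t" "1 - s"] assms(6-8) by auto
  then show ?thesis by simp
qed

lemma visc_supersol_min_at_boundary:
  assumes super: "visc_supersol H a u" and u: "continuous_on {0..1} u"
    and \<sigma>: "continuous_on UNIV \<sigma>" and below: "\<And>x. x \<in> {0<..<1} \<Longrightarrow> H x (\<sigma> x) < a"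
    and x: "x \<in> {0..1}"
  shows "min (u 0 - prim \<sigma> 0) (u 1 - prim \<sigma> 1) \<le> u x - prim \<sigma> x"
proof -
  define g where "g y = u y - prim \<sigma> y" for y
  have "continuous_on {0..1} (prim \<sigma>)"
    using has_real_derivative_prim[OF \<sigma>] by (meson DERIV_isCont continuous_at_imp_continuous_on)
  then have gc: "continuous_on {0..1} g"
    unfolding g_def by (intro continuous_intros u)
  obtain x0 where x0: "x0 \<in> {0..1}" and min: "\<And>y. y \<in> {0..1} \<Longrightarrow> g x0 \<le> g y"
    using continuous_attains_inf[OF compact_Icc _ gc] by auto
  have "x0 = 0 \<or> x0 = 1"
  proof (rule ccontr)
    assume "\<not> (x0 = 0 \<or> x0 = 1)"
    then have "x0 \<in> {0<..<1}"
      using x0 by auto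
    moreover have "\<exists>e>0. \<forall>s\<in>{0<..<1}. \<bar>s - x0\<bar> < e \<longrightarrow> u x0 - prim \<sigma> x0 \<le> u s - prim \<sigma> s"
      using min unfolding g_def by (intro exI[of _ 1]) auto
    ultimately have "a \<le> H x0 (deriv (prim \<sigma>) x0)"
      using super C1_funI(1)[OF has_real_derivative_prim[OF \<sigma>] \<sigma>] unfolding visc_supersol_def by blast
    moreover have "deriv (prim \<sigma>) x0 = \<sigma> x0"
      using has_real_derivative_prim[OF \<sigma>] by (rule DERIV_imp_deriv)
    ultimately show False
      using below[OF \<open>x0 \<in> {0<..<1}\<close>] by simp
  qed
  then show ?thesis
    using min[OF x] unfolding g_def by auto
qed

section \<open>The level set of a coercive quasiconvex Hamiltonian\<close>

lemma gt_near_on_compact: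
  fixes H :: "real \<Rightarrow> real \<Rightarrow> real"
  assumes cont: "continuous_on (S \<times> UNIV) (\<lambda>(s, p). H s p)"
    and "compact S" "compact K" "s0 \<in> S" and gt: "\<And>p. p \<in> K \<Longrightarrow> a < H s0 p"
  shows "\<exists>d>0. \<forall>t\<in>S. \<bar>t - s0\<bar> < d \<longrightarrow> (\<forall>p\<in>K. a < H t p)"
proof -
  define C where "C = {z \<in> S \<times> K. H (fst z) (snd z) \<le> a}"
  have "continuous_on (S \<times> UNIV) (\<lambda>z. H (fst z) (snd z))"
    using cont by (simp add: case_prod_beta')
  then have "continuous_on (S \<times> K) (\<lambda>z. H (fst z) (snd z))"
    by (rule continuous_on_subset) auto
  moreover have "closed (S \<times> K)"
    using \<open>compact S\<close> \<open>compact K\<close> by (auto intro: closed_Times compact_imp_closed)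
  ultimately have "closed C"
    unfolding C_def by (rule continuous_on_closed_Collect_le[OF _ continuous_on_const])
  moreover have "bounded C"
    using compact_imp_bounded[OF compact_Times[OF \<open>compact S\<close> \<open>compact K\<close>]]
    by (rule bounded_subset) (auto simp: C_def)
  ultimately have "compact C"
    by (simp add: compact_eq_bounded_closed)
  then have "open (- fst ` C)"
    by (intro open_Compl compact_imp_closed compact_continuous_image continuous_intros)
  moreover have "s0 \<in> - fst ` C"
  proof
    assume "s0 \<in> fst ` C"
    then obtain p where "(s0, p) \<in> C" by force
    then show False unfolding C_def by (auto dest: gt)
  qed
  ultimately obtain d where "d > 0" and d: "ball s0 d \<subseteq> - fst ` C"
    by (rule openE)
  have "a < H t p" if "t \<in> S" "\<bar>t - s0\<bar> < d" "p \<in> K" for t p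
  proof -
    have "t \<in> ball s0 d"
      using that(2) by (simp add: dist_real_def abs_minus_commute)
    then have "t \<notin> fst ` C"
      using d by blast
    then have "(t, p) \<notin> C"
      by (metis fst_conv image_eqI)
    then show ?thesis
      using that by (auto simp: C_def)
  qed
  then show ?thesis using \<open>d > 0\<close> by blast
qed

locale quasiconvex_level =
  fixes H :: "real \<Rightarrow> real \<Rightarrow> real" and a :: real
  assumes cont: "continuous_on ({0..1} \<times> UNIV) (\<lambda>(s, p). H s p)"
    and coercive: "\<forall>M. \<exists>R. \<forall>s\<in>{0..1}. \<forall>p. \<bar>p\<bar> > R \<longrightarrow> H s p > M"
    and quasiconvex: "\<forall>s\<in>{0..1}. \<forall>b. convex {p. H s p \<le> b}"
    and interior_cond: "\<forall>s\<in>{0..1}. \<forall>b. interior {p. H s p \<le> b} = {p. H s p < b}"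
    and a_ge: "a \<ge> aH H"
    and a_eq: "a = aH H \<Longrightarrow> (\<exists>c. \<forall>s\<in>{0..1}. minH H s = c)"
begin

abbreviation "sp \<equiv> sigma_plus H a"
abbreviation "sm \<equiv> sigma_minus H a"

lemma continuous_on_H_slice:
  assumes "s \<in> {0..1}"
  shows "continuous_on UNIV (H s)"
proof -
  have "continuous_on UNIV ((\<lambda>(s, p). H s p) \<circ> (\<lambda>p. (s, p)))"
    using assms by (intro continuous_on_compose continuous_intros continuous_on_subset[OF cont]) auto
  then show ?thesis by (simp add: o_def)
qed

lemma continuous_on_H_fixed_slope: "continuous_on {0..1} (\<lambda>s. H s p)"
proof -
  have "continuous_on {0..1} ((\<lambda>(s, p). H s p) \<circ> (\<lambda>s. (s, p)))"
    by (intro continuous_on_compose continuous_intros continuous_on_subset[OF cont]) auto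
  then show ?thesis by (simp add: o_def)
qed

lemma minH_attained:
  assumes s: "s \<in> {0..1}"
  obtains p0 where "\<And>p. H s p0 \<le> H s p"
proof -
  obtain R where R: "\<And>p. \<bar>p\<bar> > R \<Longrightarrow> H s p > H s 0"
    using coercive s by blast
  then have "R \<ge> 0"
    by (metis abs_zero less_irrefl not_le)
  have "continuous_on {-R..R} (H s)"
    using continuous_on_H_slice[OF s] by (rule continuous_on_subset) auto
  moreover have "{-R..R} \<noteq> {}"
    using \<open>R \<ge> 0\<close> by simp
  ultimately obtain p0 where p0: "p0 \<in> {-R..R}" "\<forall>p\<in>{-R..R}. H s p0 \<le> H s p"
    using continuous_attains_inf[OF compact_Icc] by blast
  have "H s p0 \<le> H s 0"
    using p0(2) \<open>R \<ge> 0\<close> by auto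
  then have "H s p0 \<le> H s p" for p
    using p0(2) R[of p] by (cases "\<bar>p\<bar> > R") (auto simp: abs_le_iff not_less)
  then show ?thesis by (rule that)
qed

lemma minH_eq: "(\<And>p. H s p0 \<le> H s p) \<Longrightarrow> minH H s = H s p0"
  unfolding minH_def by (rule cInf_eq_minimum) auto

lemma minH_le: "s \<in> {0..1} \<Longrightarrow> minH H s \<le> H s p"
  by (metis minH_attained minH_eq)

lemma minH_le_aH:
  assumes "s \<in> {0..1}"
  shows "minH H s \<le> aH H"
proof -
  have "compact ((\<lambda>s. H s 0) ` {0..1})"
    by (rule compact_continuous_image[OF continuous_on_H_fixed_slope]) auto
  then have "bdd_above ((\<lambda>s. H s 0) ` {0..1})"
    by (intro bounded_imp_bdd_above compact_imp_bounded)
  then obtain B where B: "\<forall>s\<in>{0..1}. H s 0 \<le> B"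
    by (auto simp: bdd_above_def)
  have "bdd_above (minH H ` {0..1})"
    using minH_le B by (intro bdd_aboveI2[of _ _ B]) (meson order_trans)
  then show ?thesis
    unfolding aH_def using assms by (rule cSUP_upper2) simp
qed

lemma coercive_bound:
  obtains R where "R \<ge> 0" "\<And>s p. s \<in> {0..1} \<Longrightarrow> \<bar>p\<bar> > R \<Longrightarrow> H s p > a"
proof -
  obtain R where "\<forall>s\<in>{0..1}. \<forall>p. \<bar>p\<bar> > R \<longrightarrow> H s p > a"
    using coercive by blast
  then show ?thesis
    using that[of "max R 0"] by auto
qed

lemma sublevel_eq_Icc:
  assumes s: "s \<in> {0..1}"
  obtains l r where "l \<le> r" "{p. H s p \<le> a} = {l..r}"
proof -
  define S where "S = {p. H s p \<le> a}"
  obtain R where R: "\<And>p. \<bar>p\<bar> > R \<Longrightarrow> H s p > a"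
    using coercive_bound s by metis
  have "closed S"
    unfolding S_def using closed_Collect_le[OF continuous_on_H_slice[OF s] continuous_on_const] by simp
  have "S \<subseteq> {-R..R}"
  proof
    fix p assume "p \<in> S"
    then have "\<not> R < \<bar>p\<bar>"
      using R[of p] by (auto simp: S_def)
    then show "p \<in> {-R..R}" by auto
  qed
  then have bdd: "bdd_below S" "bdd_above S"
    by (auto intro: bdd_below_mono bdd_above_mono)
  obtain p0 where "\<And>p. H s p0 \<le> H s p"
    using minH_attained s by blast
  then have "H s p0 \<le> a"
    using minH_eq minH_le_aH[OF s] a_ge by fastforce
  then have "S \<noteq> {}"
    by (auto simp: S_def)
  then have lr: "Inf S \<in> S" "Sup S \<in> S"
    using closed_contains_Inf closed_contains_Sup bdd \<open>closed S\<close> by auto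
  have "convex S"
    unfolding S_def using quasiconvex s by blast
  have S_eq: "S = {Inf S..Sup S}"
  proof
    show "S \<subseteq> {Inf S..Sup S}"
      using bdd by (auto intro: cInf_lower cSup_upper)
    show "{Inf S..Sup S} \<subseteq> S"
      using \<open>convex S\<close> lr by (meson atLeastAtMost_iff is_interval_convex_1 mem_is_interval_1_I subsetI)
  qed
  moreover have "Inf S \<le> Sup S"
    using S_eq lr by auto
  ultimately show ?thesis
    using that unfolding S_def by blast
qed

text \<open>The interior condition excludes flat pieces of level a inside the sublevel interval, so the
  level set consists exactly of its two endpoints.\<close>

lemma sublevel_interval:
  assumes s: "s \<in> {0..1}"
  shows "sm s \<le> sp s" "\<And>p. H s p \<le> a \<longleftrightarrow> sm s \<le> p \<and> p \<le> sp s"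
    "\<And>p. H s p < a \<longleftrightarrow> sm s < p \<and> p < sp s" "H s (sm s) = a" "H s (sp s) = a"
proof -
  obtain l r where "l \<le> r" and le: "{p. H s p \<le> a} = {l..r}"
    using sublevel_eq_Icc[OF s] .
  then have lt: "{p. H s p < a} = {l<..<r}"
    using interior_cond s by (metis interior_atLeastAtMost_real)
  have "{p. H s p = a} = {p. H s p \<le> a} - {p. H s p < a}"
    by auto
  also have "\<dots> = {l, r}"
    using le lt \<open>l \<le> r\<close> by auto
  finally have eq: "{p. H s p = a} = {l, r}" .
  have "sm s = l" "sp s = r"
    unfolding sigma_minus_def sigma_plus_def eq using \<open>l \<le> r\<close>
    by (auto intro: cInf_eq_minimum cSup_eq_maximum)
  then show "sm s \<le> sp s" "\<And>p. H s p \<le> a \<longleftrightarrow> sm s \<le> p \<and> p \<le> sp s"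
    "\<And>p. H s p < a \<longleftrightarrow> sm s < p \<and> p < sp s" "H s (sm s) = a" "H s (sp s) = a"
    using le lt eq \<open>l \<le> r\<close> by (auto simp: set_eq_iff)
qed

lemma sigma_bounded:
  obtains R where "R \<ge> 0" "\<And>s. s \<in> {0..1} \<Longrightarrow> \<bar>sp s\<bar> \<le> R \<and> \<bar>sm s\<bar> \<le> R"
proof -
  obtain R where R: "R \<ge> 0" "\<And>s p. s \<in> {0..1} \<Longrightarrow> \<bar>p\<bar> > R \<Longrightarrow> H s p > a"
    using coercive_bound by blast
  have "\<bar>sp s\<bar> \<le> R \<and> \<bar>sm s\<bar> \<le> R" if "s \<in> {0..1}" for s
    using R(2)[OF that, of "sp s"] R(2)[OF that, of "sm s"] sublevel_interval(4,5)[OF that] by force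
  then show ?thesis
    using that R(1) by blast
qed

lemma sigma_nondegenerate:
  assumes "a > aH H" "s \<in> {0..1}"
  shows "sm s < sp s"
proof -
  obtain p0 where "\<And>p. H s p0 \<le> H s p"
    using minH_attained[OF \<open>s \<in> {0..1}\<close>] by blast
  then have "H s p0 < a"
    using minH_eq minH_le_aH[OF \<open>s \<in> {0..1}\<close>] assms(1) by fastforce
  then show ?thesis
    using sublevel_interval(3)[OF \<open>s \<in> {0..1}\<close>] by fastforce
qed

lemma sigma_degenerate:
  assumes "a = aH H" "s \<in> {0..1}"
  shows "sm s = sp s"
proof -
  obtain c where c: "\<forall>s\<in>{0..1}. minH H s = c"
    using a_eq[OF \<open>a = aH H\<close>] by blast
  then have "aH H = c"
    unfolding aH_def by (simp add: cSUP_const)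
  then have ge: "a \<le> H s p" for p
    using minH_le[OF \<open>s \<in> {0..1}\<close>, of p] c \<open>s \<in> {0..1}\<close> assms(1) by simp
  have "\<not> sm s < sp s"
  proof
    assume "sm s < sp s"
    then have "H s ((sm s + sp s) / 2) < a"
      using sublevel_interval(3)[OF \<open>s \<in> {0..1}\<close>] by auto
    then show False
      using ge[of "(sm s + sp s) / 2"] by simp
  qed
  then show ?thesis
    using sublevel_interval(1)[OF \<open>s \<in> {0..1}\<close>] by simp
qed

lemma sigma_outer_near:
  assumes s0: "s0 \<in> {0..1}" and "e > 0"
  shows "\<exists>d>0. \<forall>t\<in>{0..1}. \<bar>t - s0\<bar> < d \<longrightarrow> sm s0 - e < sm t \<and> sp t < sp s0 + e"
proof -
  obtain R where R: "\<And>s. s \<in> {0..1} \<Longrightarrow> \<bar>sp s\<bar> \<le> R \<and> \<bar>sm s\<bar> \<le> R"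
    using sigma_bounded by blast
  define K where "K = {-R..sm s0 - e} \<union> {sp s0 + e..R}"
  have "a < H s0 p" if "p \<in> K" for p
    using that sublevel_interval(2)[OF s0, of p] \<open>e > 0\<close> by (auto simp: K_def not_le)
  then obtain d where "d > 0" and d: "\<forall>t\<in>{0..1}. \<bar>t - s0\<bar> < d \<longrightarrow> (\<forall>p\<in>K. a < H t p)"
    using gt_near_on_compact[OF cont compact_Icc _ s0] unfolding K_def by blast
  have "sm s0 - e < sm t \<and> sp t < sp s0 + e" if "t \<in> {0..1}" "\<bar>t - s0\<bar> < d" for t
  proof -
    have "sm t \<notin> K" "sp t \<notin> K"
      using d[rule_format, OF that] sublevel_interval(4,5)[OF that(1)] by (metis less_irrefl)+
    then show ?thesis
      using R[OF that(1)] by (auto simp: K_def abs_le_iff)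
  qed
  then show ?thesis
    using \<open>d > 0\<close> by blast
qed

text \<open>The other halves of the continuity of the two branches need a point strictly below level a
  between them, so they hold only in the nondegenerate case; when a = aH H the branches coincide.\<close>

lemma sigma_inner_near:
  assumes "a > aH H" and s0: "s0 \<in> {0..1}" and "e > 0"
  shows "\<exists>d>0. \<forall>t\<in>{0..1}. \<bar>t - s0\<bar> < d \<longrightarrow> sm t < sm s0 + e \<and> sp s0 - e < sp t"
proof -
  have lt_near: "\<exists>d>0. \<forall>t\<in>{0..1}. \<bar>t - s0\<bar> < d \<longrightarrow> sm t < p \<and> p < sp t"
    if "sm s0 < p" "p < sp s0" for p
  proof -
    have "H s0 p < a"
      using sublevel_interval(3)[OF s0] that by blast
    then obtain d where "d > 0" "\<forall>t\<in>{0..1}. dist t s0 < d \<longrightarrow> dist (H t p) (H s0 p) < a - H s0 p"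
      using continuous_on_H_fixed_slope[of p] s0 unfolding continuous_on_iff by (metis diff_gt_0_iff_gt)
    then show ?thesis
      using sublevel_interval(3) by (intro exI[of _ d]) (auto simp: dist_real_def abs_less_iff)
  qed
  define m where "m = (sm s0 + sp s0) / 2"
  define p1 where "p1 = min (sm s0 + e / 2) m"
  define p2 where "p2 = max (sp s0 - e / 2) m"
  have "sm s0 < m" "m < sp s0"
    using sigma_nondegenerate[OF assms(1,2)] by (auto simp: m_def)
  then have p: "sm s0 < p1" "p1 < sp s0" "sm s0 < p2" "p2 < sp s0"
    using \<open>e > 0\<close> by (auto simp: p1_def p2_def)
  obtain d1 where "d1 > 0" and d1: "\<forall>t\<in>{0..1}. \<bar>t - s0\<bar> < d1 \<longrightarrow> sm t < p1 \<and> p1 < sp t"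
    using lt_near[OF p(1,2)] by blast
  obtain d2 where "d2 > 0" and d2: "\<forall>t\<in>{0..1}. \<bar>t - s0\<bar> < d2 \<longrightarrow> sm t < p2 \<and> p2 < sp t"
    using lt_near[OF p(3,4)] by blast
  have "p1 < sm s0 + e" "sp s0 - e < p2"
    using \<open>e > 0\<close> by (auto simp: p1_def p2_def)
  then show ?thesis
    using d1 d2 \<open>d1 > 0\<close> \<open>d2 > 0\<close> by (intro exI[of _ "min d1 d2"]) force
qed

lemma continuous_on_sigma: "continuous_on {0..1} sp" "continuous_on {0..1} sm"
proof -
  have "\<exists>d>0. \<forall>t\<in>{0..1}. \<bar>t - s0\<bar> < d \<longrightarrow> \<bar>sp t - sp s0\<bar> < e \<and> \<bar>sm t - sm s0\<bar> < e"
    if s0: "s0 \<in> {0..1}" and "e > 0" for s0 e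
  proof -
    obtain d1 where "d1 > 0"
      and d1: "\<forall>t\<in>{0..1}. \<bar>t - s0\<bar> < d1 \<longrightarrow> sm s0 - e < sm t \<and> sp t < sp s0 + e"
      using sigma_outer_near[OF s0 \<open>e > 0\<close>] by blast
    show ?thesis
    proof (cases "a > aH H")
      case True
      then obtain d2 where "d2 > 0"
        and d2: "\<forall>t\<in>{0..1}. \<bar>t - s0\<bar> < d2 \<longrightarrow> sm t < sm s0 + e \<and> sp s0 - e < sp t"
        using sigma_inner_near[OF _ s0 \<open>e > 0\<close>] by blast
      show ?thesis
        using d1 d2 \<open>d1 > 0\<close> \<open>d2 > 0\<close> by (intro exI[of _ "min d1 d2"]) (auto simp: abs_less_iff)
    next
      case False
      then have "a = aH H"
        using a_ge by simp
      then show ?thesis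
        using d1 \<open>d1 > 0\<close> sigma_degenerate s0 by (intro exI[of _ d1]) (auto simp: abs_less_iff)
    qed
  qed
  then show "continuous_on {0..1} sp" "continuous_on {0..1} sm"
    unfolding continuous_on_iff dist_real_def by blast+
qed

definition Sp :: "real \<Rightarrow> real" where "Sp = prim (ext01 sp)"
definition Sm :: "real \<Rightarrow> real" where "Sm = prim (ext01 sm)"

lemma continuous_on_ext01_sigma: "continuous_on UNIV (ext01 sp)" "continuous_on UNIV (ext01 sm)"
  using continuous_on_ext01 continuous_on_sigma by blast+

lemma has_real_derivative_Sp: "(Sp has_real_derivative ext01 sp x) (at x)"
  unfolding Sp_def by (rule has_real_derivative_prim[OF continuous_on_ext01_sigma(1)])

lemma has_real_derivative_Sm: "(Sm has_real_derivative ext01 sm x) (at x)"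
  unfolding Sm_def by (rule has_real_derivative_prim[OF continuous_on_ext01_sigma(2)])

lemma Sp_0 [simp]: "Sp 0 = 0" and Sm_0 [simp]: "Sm 0 = 0"
  by (simp_all add: Sp_def Sm_def)

lemma integral_sigma_plus: "0 \<le> s \<Longrightarrow> s \<le> t \<Longrightarrow> t \<le> 1 \<Longrightarrow> integral {s..t} sp = Sp t - Sp s"
  unfolding Sp_def
  by (subst integral_eq_prim_diff[OF continuous_on_ext01_sigma(1), symmetric]) (auto intro: integral_cong)

lemma integral_sigma_minus: "0 \<le> s \<Longrightarrow> s \<le> t \<Longrightarrow> t \<le> 1 \<Longrightarrow> integral {s..t} sm = Sm t - Sm s"
  unfolding Sm_def
  by (subst integral_eq_prim_diff[OF continuous_on_ext01_sigma(2), symmetric]) (auto intro: integral_cong)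

lemma ext01_sigma_le: "ext01 sm y \<le> ext01 sp y"
  unfolding ext01_def by (rule sublevel_interval(1)) auto

lemma ext01_sigma_gap_bounded:
  obtains D where "\<And>y. ext01 sp y - ext01 sm y \<le> D"
proof -
  obtain R where R: "\<And>s. s \<in> {0..1} \<Longrightarrow> \<bar>sp s\<bar> \<le> R \<and> \<bar>sm s\<bar> \<le> R"
    using sigma_bounded by blast
  have "ext01 sp y - ext01 sm y \<le> 2 * R" for y
  proof -
    have "max 0 (min 1 y) \<in> {0..1}" by auto
    from R[OF this] show ?thesis
      unfolding ext01_def by (simp add: abs_le_iff)
  qed
  then show ?thesis
    using that by blast
qed

definition weighted_slope :: "(real \<Rightarrow> real) \<Rightarrow> real \<Rightarrow> real" where
  "weighted_slope \<rho> y = ext01 sm y + \<rho> y * (ext01 sp y - ext01 sm y)"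

lemma continuous_on_weighted_slope:
  "continuous_on UNIV \<rho> \<Longrightarrow> continuous_on UNIV (weighted_slope \<rho>)"
  unfolding weighted_slope_def by (intro continuous_intros continuous_on_ext01_sigma)

lemma weighted_slope_below:
  assumes "a > aH H" "y \<in> {0<..<1}" "0 < \<rho> y" "\<rho> y < 1"
  shows "H y (weighted_slope \<rho> y) < a"
proof -
  have y: "y \<in> {0..1}"
    using assms(2) by auto
  have "0 < \<rho> y * (sp y - sm y)" "0 < (1 - \<rho> y) * (sp y - sm y)"
    using sigma_nondegenerate[OF assms(1) y] assms(3,4) by auto
  then show ?thesis
    using sublevel_interval(3)[OF y] y by (auto simp: weighted_slope_def algebra_simps)
qed

lemma prim_weighted_slope_increment_le:
  assumes \<rho>: "continuous_on UNIV \<rho>" and "s \<le> t" and D: "\<And>y. ext01 sp y - ext01 sm y \<le> D"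
    and "0 \<le> c" and bounds: "\<And>y. s \<le> y \<Longrightarrow> y \<le> t \<Longrightarrow> 0 \<le> \<rho> y \<and> \<rho> y \<le> c"
  shows "prim (weighted_slope \<rho>) t - prim (weighted_slope \<rho>) s \<le> Sm t - Sm s + c * D * (t - s)"
proof (rule increment_le_of_deriv_le[OF \<open>s \<le> t\<close>
      has_real_derivative_prim[OF continuous_on_weighted_slope[OF \<rho>]] has_real_derivative_Sm])
  fix y assume "s \<le> y" "y \<le> t"
  then have "0 \<le> \<rho> y" "\<rho> y \<le> c"
    using bounds by auto
  then have "\<rho> y * (ext01 sp y - ext01 sm y) \<le> c * D"
    using ext01_sigma_le[of y] D[of y] \<open>0 \<le> c\<close> by (intro mult_mono) auto
  then show "weighted_slope \<rho> y \<le> ext01 sm y + c * D"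
    by (simp add: weighted_slope_def)
qed

lemma prim_weighted_slope_increment_ge:
  assumes \<rho>: "continuous_on UNIV \<rho>" and "s \<le> t" and D: "\<And>y. ext01 sp y - ext01 sm y \<le> D"
    and "0 \<le> c" and bounds: "\<And>y. s \<le> y \<Longrightarrow> y \<le> t \<Longrightarrow> 1 - c \<le> \<rho> y \<and> \<rho> y \<le> 1"
  shows "Sp t - Sp s \<le> prim (weighted_slope \<rho>) t - prim (weighted_slope \<rho>) s + c * D * (t - s)"
proof (rule increment_le_of_deriv_le[OF \<open>s \<le> t\<close> has_real_derivative_Sp
      has_real_derivative_prim[OF continuous_on_weighted_slope[OF \<rho>]]])
  fix y assume "s \<le> y" "y \<le> t"
  then have "1 - c \<le> \<rho> y" "\<rho> y \<le> 1"
    using bounds by auto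
  then have "(1 - \<rho> y) * (ext01 sp y - ext01 sm y) \<le> c * D"
    using ext01_sigma_le[of y] D[of y] \<open>0 \<le> c\<close> by (intro mult_mono) auto
  then show "ext01 sp y \<le> weighted_slope \<rho> y + c * D"
    by (simp add: weighted_slope_def algebra_simps)
qed

text \<open>The slope follows sigma_plus up to x and sigma_minus from x + \<eta> on, but only up to a
  fraction \<theta> of the gap, so that it stays strictly inside the sublevel interval.\<close>

lemma interpolating_slope:
  assumes "a > aH H" "0 \<le> x" "x < 1" "\<epsilon> > 0"
  obtains \<sigma> where "continuous_on UNIV \<sigma>" "\<And>y. y \<in> {0<..<1} \<Longrightarrow> H y (\<sigma> y) < a"
    "Sp x - \<epsilon> \<le> prim \<sigma> x" "prim \<sigma> 1 - prim \<sigma> x \<le> Sm 1 - Sm x + \<epsilon>"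
proof -
  obtain D where D: "\<And>y. ext01 sp y - ext01 sm y \<le> D"
    using ext01_sigma_gap_bounded by blast
  have "D \<ge> 0"
    using D[of 0] ext01_sigma_le[of 0] by linarith
  define \<delta> where "\<delta> = \<epsilon> / (2 * D + 2)"
  have "\<delta> > 0" "2 * (D * \<delta>) \<le> \<epsilon>"
    using \<open>D \<ge> 0\<close> \<open>\<epsilon> > 0\<close> by (auto simp: \<delta>_def field_simps)
  define \<theta> where "\<theta> = min (1 / 4) \<delta>"
  define \<eta> where "\<eta> = min ((1 - x) / 2) \<delta>"
  have \<theta>: "0 < \<theta>" "\<theta> \<le> 1 / 4" "\<theta> \<le> \<delta>"
    using \<open>\<delta> > 0\<close> by (auto simp: \<theta>_def)
  have "\<eta> \<le> (1 - x) / 2"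
    unfolding \<eta>_def by (rule min.cobounded1)
  then have \<eta>: "0 < \<eta>" "x + \<eta> \<le> 1" "\<eta> \<le> \<delta>"
    using \<open>\<delta> > 0\<close> \<open>x < 1\<close> by (auto simp: \<eta>_def)
  obtain \<rho> where \<rho>: "continuous_on UNIV \<rho>" "\<And>y. \<theta> \<le> \<rho> y" "\<And>y. \<rho> y \<le> 1 - \<theta>"
    and \<rho>_left: "\<And>y. y \<le> x \<Longrightarrow> \<rho> y = 1 - \<theta>" and \<rho>_right: "\<And>y. x + \<eta> \<le> y \<Longrightarrow> \<rho> y = \<theta>"
    using ramp_cutoff[OF \<theta>(1) _ \<eta>(1), of x] \<theta>(2) by auto
  have \<rho>01: "0 < \<rho> y" "\<rho> y < 1" for y
    using \<rho>(2,3)[of y] \<theta>(1) by linarith+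
  let ?L = "prim (weighted_slope \<rho>)"
  have "Sp x - Sp 0 \<le> ?L x - ?L 0 + \<theta> * D * (x - 0)"
    using \<rho>_left \<theta>(1) by (intro prim_weighted_slope_increment_ge[OF \<rho>(1) \<open>0 \<le> x\<close> D]) auto
  then have left: "Sp x \<le> ?L x + \<theta> * D * x"
    by simp
  have "?L (x + \<eta>) - ?L x \<le> Sm (x + \<eta>) - Sm x + 1 * D * (x + \<eta> - x)"
    using \<rho>01[THEN less_imp_le] \<eta>(1) by (intro prim_weighted_slope_increment_le[OF \<rho>(1) _ D]) auto
  then have mid: "?L (x + \<eta>) - ?L x \<le> Sm (x + \<eta>) - Sm x + D * \<eta>"
    by simp
  have right: "?L 1 - ?L (x + \<eta>) \<le> Sm 1 - Sm (x + \<eta>) + \<theta> * D * (1 - (x + \<eta>))"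
    using \<rho>_right \<theta> by (intro prim_weighted_slope_increment_le[OF \<rho>(1) \<eta>(2) D]) auto
  have small: "\<theta> * D * x \<le> \<theta> * D" "\<theta> * D * (1 - (x + \<eta>)) \<le> \<theta> * D"
    using \<theta>(1) \<eta>(1) \<open>D \<ge> 0\<close> \<open>x < 1\<close> \<open>0 \<le> x\<close> by (auto intro!: mult_left_le)
  have "\<theta> * D \<le> D * \<delta>" "D * \<eta> \<le> D * \<delta>"
    using mult_right_mono[OF \<theta>(3) \<open>D \<ge> 0\<close>] mult_left_mono[OF \<eta>(3) \<open>D \<ge> 0\<close>]
    by (simp_all add: mult.commute)
  have "Sp x - \<epsilon> \<le> ?L x" "?L 1 - ?L x \<le> Sm 1 - Sm x + \<epsilon>"
    using left mid right small \<open>\<theta> * D \<le> D * \<delta>\<close> \<open>D * \<eta> \<le> D * \<delta>\<close>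
      \<open>2 * (D * \<delta>) \<le> \<epsilon>\<close> \<open>\<epsilon> > 0\<close> by linarith+
  moreover have "H y (weighted_slope \<rho> y) < a" if "y \<in> {0<..<1}" for y
    using weighted_slope_below[OF assms(1) that \<rho>01] .
  ultimately show ?thesis
    using that continuous_on_weighted_slope[OF \<rho>(1)] by blast
qed

end

section \<open>The Dirichlet problem\<close>

locale dirichlet_data = quasiconvex_level +
  fixes \<alpha> \<beta> :: real
  assumes lower: "integral {0..1} (sigma_minus H a) \<le> \<beta> - \<alpha>"
    and upper: "\<beta> - \<alpha> \<le> integral {0..1} (sigma_plus H a)"
begin

definition Wp :: "real \<Rightarrow> real" where "Wp s = \<alpha> + Sp s"
definition Wm :: "real \<Rightarrow> real" where "Wm s = \<beta> - (Sm 1 - Sm s)"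
definition w :: "real \<Rightarrow> real" where
  "w = (\<lambda>s. min (\<alpha> + integral {0..s} sp) (\<beta> - integral {s..1} sm))"

lemma has_real_derivative_Wp: "(Wp has_real_derivative ext01 sp x) (at x)"
  unfolding Wp_def[abs_def] using has_real_derivative_Sp by (auto intro!: derivative_eq_intros)

lemma has_real_derivative_Wm: "(Wm has_real_derivative ext01 sm x) (at x)"
  unfolding Wm_def[abs_def] using has_real_derivative_Sm by (auto intro!: derivative_eq_intros)

lemma continuous_on_Wp: "continuous_on S Wp" and continuous_on_Wm: "continuous_on S Wm"
  using has_real_derivative_Wp has_real_derivative_Wm
  by (meson DERIV_isCont continuous_at_imp_continuous_on)+

lemma w_eq_min: "s \<in> {0..1} \<Longrightarrow> w s = min (Wp s) (Wm s)"
  by (simp add: w_def Wp_def Wm_def integral_sigma_plus integral_sigma_minus)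

lemma Wm_increment_le_Wp: "s \<le> t \<Longrightarrow> Wm t - Wm s \<le> Wp t - Wp s"
  using increment_le_of_deriv_le[OF _ has_real_derivative_Wm has_real_derivative_Wp, of s t 0]
    ext01_sigma_le by (metis add.right_neutral mult_zero_left)

lemma w_0: "w 0 = \<alpha>"
  using lower integral_sigma_minus[of 0 1] by (simp add: w_eq_min Wp_def Wm_def)

lemma w_1: "w 1 = \<beta>"
  using upper integral_sigma_plus[of 0 1] by (simp add: w_eq_min Wp_def Wm_def)

lemma continuous_on_w: "continuous_on {0..1} w"
  using continuous_on_min[OF continuous_on_Wp continuous_on_Wm] by (rule continuous_on_eq) (simp add: w_eq_min)

lemma w_increment_between:
  assumes "0 \<le> s" "s \<le> t" "t \<le> 1"
  shows "Wm t - Wm s \<le> w t - w s" "w t - w s \<le> Wp t - Wp s"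
  using Wm_increment_le_Wp[OF \<open>s \<le> t\<close>] w_eq_min[of s] w_eq_min[of t] assms by (auto simp: min_def)

lemma visc_subsol_w: "visc_subsol H a w"
  unfolding visc_subsol_def
proof (intro ballI allI impI)
  fix s0 :: real and \<phi> :: "real \<Rightarrow> real"
  assume s0: "s0 \<in> {0<..<1}" and \<phi>: "C1_fun \<phi>"
    and "\<exists>e>0. \<forall>s\<in>{0<..<1}. \<bar>s - s0\<bar> < e \<longrightarrow> w s - \<phi> s \<le> w s0 - \<phi> s0"
  then obtain e where "e > 0" and touch: "\<forall>s\<in>{0<..<1}. \<bar>s - s0\<bar> < e \<longrightarrow> w s - \<phi> s \<le> w s0 - \<phi> s0"
    by blast
  define d where "d = min e (min s0 (1 - s0))"
  have "d > 0" "s0 \<in> {0..1}"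
    using \<open>e > 0\<close> s0 by (auto simp: d_def)
  have near: "w y - w s0 \<le> \<phi> y - \<phi> s0" "0 \<le> y" "y \<le> 1" if "\<bar>y - s0\<bar> < d" for y
    using touch[rule_format, of y] that by (auto simp: d_def abs_less_iff)
  have "Wm y - Wm s0 \<le> \<phi> y - \<phi> s0" if "s0 < y" "y < s0 + d" for y
    using w_increment_between(1)[of s0 y] near[of y] that \<open>s0 \<in> {0..1}\<close> by auto
  then have "ext01 sm s0 \<le> deriv \<phi> s0"
    by (rule deriv_le_of_increment_le_right[OF has_real_derivative_Wm C1_fun_has_derivative[OF \<phi>] \<open>d > 0\<close>])
  moreover have "Wp y - Wp s0 \<le> \<phi> y - \<phi> s0" if "s0 - d < y" "y < s0" for y
    using w_increment_between(2)[of y s0] near[of y] that \<open>s0 \<in> {0..1}\<close> by auto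
  then have "deriv \<phi> s0 \<le> ext01 sp s0"
    by (rule deriv_le_of_increment_le_left[OF has_real_derivative_Wp C1_fun_has_derivative[OF \<phi>] \<open>d > 0\<close>])
  ultimately show "H s0 (deriv \<phi> s0) \<le> a"
    using sublevel_interval(2)[OF \<open>s0 \<in> {0..1}\<close>] \<open>s0 \<in> {0..1}\<close> by simp
qed

lemma visc_supersol_w: "visc_supersol H a w"
  unfolding visc_supersol_def
proof (intro ballI allI impI)
  fix s0 :: real and \<phi> :: "real \<Rightarrow> real"
  assume s0: "s0 \<in> {0<..<1}" and \<phi>: "C1_fun \<phi>"
    and "\<exists>e>0. \<forall>s\<in>{0<..<1}. \<bar>s - s0\<bar> < e \<longrightarrow> w s - \<phi> s \<ge> w s0 - \<phi> s0"
  then obtain e where "e > 0" and touch: "\<forall>s\<in>{0<..<1}. \<bar>s - s0\<bar> < e \<longrightarrow> w s - \<phi> s \<ge> w s0 - \<phi> s0"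
    by blast
  define d where "d = min e (min s0 (1 - s0))"
  have "d > 0" "s0 \<in> {0..1}"
    using \<open>e > 0\<close> s0 by (auto simp: d_def)
  have near: "w s0 - \<phi> s0 \<le> w y - \<phi> y" "y \<in> {0..1}" if "\<bar>s0 - y\<bar> < d" for y
    using touch[rule_format, of y] that by (auto simp: d_def abs_less_iff)
  text \<open>Where w coincides with one of its two branches, that branch minus \<phi> has a local minimum.\<close>
  have "deriv \<phi> s0 = sp s0 \<or> deriv \<phi> s0 = sm s0"
  proof (cases "Wp s0 \<le> Wm s0")
    case True
    have "\<forall>y. \<bar>s0 - y\<bar> < d \<longrightarrow> Wp s0 - \<phi> s0 \<le> Wp y - \<phi> y"
    proof (intro allI impI)
      fix y assume "\<bar>s0 - y\<bar> < d"
      then have "w s0 - \<phi> s0 \<le> w y - \<phi> y" "w y \<le> Wp y"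
        using near w_eq_min by auto
      then show "Wp s0 - \<phi> s0 \<le> Wp y - \<phi> y"
        using w_eq_min[OF \<open>s0 \<in> {0..1}\<close>] True by auto
    qed
    then have "ext01 sp s0 - deriv \<phi> s0 = 0"
      using DERIV_local_min[OF DERIV_diff[OF has_real_derivative_Wp C1_fun_has_derivative[OF \<phi>]] \<open>d > 0\<close>]
      by blast
    then show ?thesis
      using \<open>s0 \<in> {0..1}\<close> by simp
  next
    case False
    have "\<forall>y. \<bar>s0 - y\<bar> < d \<longrightarrow> Wm s0 - \<phi> s0 \<le> Wm y - \<phi> y"
    proof (intro allI impI)
      fix y assume "\<bar>s0 - y\<bar> < d"
      then have "w s0 - \<phi> s0 \<le> w y - \<phi> y" "w y \<le> Wm y"
        using near w_eq_min by auto
      then show "Wm s0 - \<phi> s0 \<le> Wm y - \<phi> y"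
        using w_eq_min[OF \<open>s0 \<in> {0..1}\<close>] False by auto
    qed
    then have "ext01 sm s0 - deriv \<phi> s0 = 0"
      using DERIV_local_min[OF DERIV_diff[OF has_real_derivative_Wm C1_fun_has_derivative[OF \<phi>]] \<open>d > 0\<close>]
      by blast
    then show ?thesis
      using \<open>s0 \<in> {0..1}\<close> by simp
  qed
  then show "a \<le> H s0 (deriv \<phi> s0)"
    using sublevel_interval(4,5)[OF \<open>s0 \<in> {0..1}\<close>] by auto
qed

lemma visc_subsol_le_w:
  assumes u: "continuous_on {0..1} u" "visc_subsol H a u" "u 0 = \<alpha>" "u 1 = \<beta>"
    and x: "x \<in> {0..1}"
  shows "u x \<le> w x"
proof -
  have "u x - u 0 \<le> Sp x - Sp 0"
    using x sublevel_interval(2)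
    by (intro visc_subsol_slope_le[OF u(2,1) has_real_derivative_Sp continuous_on_ext01_sigma(1)]) auto
  moreover have "Sm 1 - Sm x \<le> u 1 - u x"
    using x sublevel_interval(2)
    by (intro visc_subsol_slope_ge[OF u(2,1) has_real_derivative_Sm continuous_on_ext01_sigma(2)]) auto
  ultimately show ?thesis
    using u(3,4) w_eq_min[OF x] by (simp add: Wp_def Wm_def)
qed

lemma visc_sol_ge_w:
  assumes u: "continuous_on {0..1} u" "visc_sol H a u" "u 0 = \<alpha>" "u 1 = \<beta>"
    and x: "x \<in> {0..1}"
  shows "w x \<le> u x"
proof (cases "a > aH H")
  case True
  show ?thesis
  proof (cases "x = 1")
    case True
    then show ?thesis
      using w_1 u(4) by simp
  next
    case False
    have "w x \<le> u x + \<epsilon>" if "\<epsilon> > 0" for \<epsilon>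
    proof -
      obtain \<sigma> where \<sigma>: "continuous_on UNIV \<sigma>" "\<And>y. y \<in> {0<..<1} \<Longrightarrow> H y (\<sigma> y) < a"
        and bounds: "Sp x - \<epsilon> \<le> prim \<sigma> x" "prim \<sigma> 1 - prim \<sigma> x \<le> Sm 1 - Sm x + \<epsilon>"
        using interpolating_slope[OF True _ _ \<open>\<epsilon> > 0\<close>, of x] x False by auto
      have "min (u 0 - prim \<sigma> 0) (u 1 - prim \<sigma> 1) \<le> u x - prim \<sigma> x"
        using u(1) \<sigma> x u(2) unfolding visc_sol_def by (intro visc_supersol_min_at_boundary) auto
      then show ?thesis
        using bounds u(3,4) w_eq_min[OF x] by (auto simp: Wp_def Wm_def)
    qed
    then show ?thesis
      by (rule field_le_epsilon)
  qed
next
  case False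
  then have "a = aH H"
    using a_ge by simp
  then have "ext01 sm = ext01 sp"
    using sigma_degenerate by (auto simp: ext01_def fun_eq_iff)
  then have "Sm = Sp"
    by (simp add: Sm_def Sp_def)
  moreover have "Sm x - Sm 0 \<le> u x - u 0"
    using x sublevel_interval(2) u(1,2) unfolding visc_sol_def
    by (intro visc_subsol_slope_ge[OF _ _ has_real_derivative_Sm continuous_on_ext01_sigma(2)]) auto
  ultimately show ?thesis
    using u(3) w_eq_min[OF x] by (simp add: Wp_def)
qed

end

theorem proposition5p2:
  fixes H :: "real \<Rightarrow> real \<Rightarrow> real" and a \<alpha> \<beta> :: real
  assumes cont: "continuous_on ({0..1} \<times> UNIV) (\<lambda>(s, p). H s p)"
    and coercive: "\<forall>M. \<exists>R. \<forall>s\<in>{0..1}. \<forall>p. \<bar>p\<bar> > R \<longrightarrow> H s p > M"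
    and quasiconvex: "\<forall>s\<in>{0..1}. \<forall>b. convex {p. H s p \<le> b}"
    and interior_cond: "\<forall>s\<in>{0..1}. \<forall>b. interior {p. H s p \<le> b} = {p. H s p < b}"
    and a_ge: "a \<ge> aH H"
    and a_eq: "a = aH H \<Longrightarrow> (\<exists>c. \<forall>s\<in>{0..1}. minH H s = c)"
    and lower: "integral {0..1} (sigma_minus H a) \<le> \<beta> - \<alpha>"
    and upper: "\<beta> - \<alpha> \<le> integral {0..1} (sigma_plus H a)"
  shows "let w = (\<lambda>s. min (\<alpha> + integral {0..s} (sigma_plus H a))
                          (\<beta> - integral {s..1} (sigma_minus H a)))
         in continuous_on {0..1} w \<and> visc_sol H a w \<and> w 0 = \<alpha> \<and> w 1 = \<beta> \<and>
            (\<forall>u. continuous_on {0..1} u \<and> visc_sol H a u \<and> u 0 = \<alpha> \<and> u 1 = \<beta>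
                 \<longrightarrow> (\<forall>s\<in>{0..1}. u s = w s))"
proof -
  interpret dirichlet_data H a \<alpha> \<beta>
    by unfold_locales (fact assms)+
  have "u s = w s"
    if "continuous_on {0..1} u" "visc_sol H a u" "u 0 = \<alpha>" "u 1 = \<beta>" "s \<in> {0..1}" for u s
    using visc_subsol_le_w[of u s] visc_sol_ge_w[of u s] that unfolding visc_sol_def by force
  then show ?thesis
    unfolding Let_def w_def[symmetric] visc_sol_def
    using continuous_on_w visc_subsol_w visc_supersol_w w_0 w_1 by blast
qed

end
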